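(* Let $\{z_n\}$ be a sequence of non-zero complex numbers with $|z_n|\to\infty$ whose classical exponent of convergence is less than $1$, and let $P(z)=\prod_n(1-z/z_n)$ be its canonical product. Suppose $\{z_n\}$ has finite $\varphi$-exponent of convergence $\lambda\ge0$. Let $\varphi$ and $s$ be differentiable with $\limsup_{r\to\infty}\frac{r^2s'(r)}{s(r)^2}<\infty$, and suppose $$\limsup_{r\to\infty}\frac{\varphi'(s(r))s'(r)r}{\varphi(s(r))}<\frac1\lambda\quad\text{or}\quad\liminf_{r\to\infty}\frac{\varphi'(s(r))s'(r)r}{\varphi(s(r))}\ge\frac1\lambda$$ (with $1/0=\infty$). Let $\varepsilon>0$ and $r_n=|z_n|$. If $z$ lies outside the discs $D_n=\{z:|z-z_n|\le r_n^{-(\lambda+\varepsilon)}\}$, then $$\log\frac{1}{|P(z)|}=O\left(\varphi(s(r))^{\lambda+\varepsilon}\log r\right),\quad |z|=r\to\infty.$$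
   Context: Let $R_0>0$. $\varphi:(R_0,\infty)\to(0,\infty)$ is a non-decreasing unbounded function with $\log r\le\varphi(r)\le r$ for $r\ge R_0$; $s:(R_0,\infty)\to(0,\infty)$ is non-decreasing with $r<s(r)\le r^2$ for $r\ge R_0$ and $\liminf_{r\to\infty}s(r)/r>1$. The $\varphi$-exponent of convergence of $\{z_n\}$ is $\inf\{\mu>0:\sum_n\varphi(|z_n|)^{-\mu}<\infty\}$ ($=\infty$ if the sum diverges for all $\mu>0$). *)

theory Defs
  imports "HOL-Analysis.Analysis"
begin

definition phi_exponent :: "(real \<Rightarrow> real) \<Rightarrow> (nat \<Rightarrow> complex) \<Rightarrow> ereal" where
  "phi_exponent \<phi> z =
     Inf {ereal \<mu> | \<mu>. \<mu> > 0 \<and> summable (\<lambda>n. \<phi> (norm (z n)) powr (- \<mu>))}"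

definition conv_exponent :: "(nat \<Rightarrow> complex) \<Rightarrow> ereal" where
  "conv_exponent z = phi_exponent (\<lambda>r. r) z"

definition canonical_product :: "(nat \<Rightarrow> complex) \<Rightarrow> complex \<Rightarrow> complex" where
  "canonical_product z w = (\<Prod>n. 1 - w / z n)"

end

theory Submission
  imports Defs
begin

text \<open>Write \<open>r = |w|\<close> and split the zeros at \<open>s r\<close>. For \<open>|z n| \<le> s r \<le> r\<^sup>2\<close>, being outside
  the exceptional discs gives \<open>ln |1 - w / z n| \<ge> -2 (\<lambda> + \<epsilon> + 1) ln r\<close>, and the
  \<open>\<phi>\<close>-exponent bounds the number of such zeros by \<open>O(\<phi>(s r) ^ (\<lambda> + \<epsilon>))\<close>. Since \<open>s r \<ge> c r\<close>
  with \<open>c > 1\<close>, each zero with \<open>|z n| > s r\<close> costs at most \<open>c / (c - 1) * r / |z n|\<close>, so it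
  remains to bound \<open>\<Sum> r / |z n|\<close> over these zeros by \<open>O(\<phi>(s r) ^ (\<lambda> + \<epsilon>))\<close>. This is
  where the elasticity \<open>u g'(u) / g(u)\<close> of \<open>g = \<phi> \<circ> s\<close> enters. If it is eventually below
  some \<open>a\<close> with \<open>a \<lambda> < 1\<close>, then \<open>g (2^k r) \<le> 2^(k a) g r\<close>, and counting the zeros in the
  dyadic ranges \<open>s (2^(k-1) r) < |z n| \<le> s (2^k r)\<close> leads to a convergent geometric series.
  If it is eventually above \<open>1 / (\<lambda> + \<epsilon>)\<close>, then \<open>r = O(g(r) ^ (\<lambda> + \<epsilon>))\<close>, and the sum is at
  most \<open>r \<Sum> 1 / |z n|\<close>, which is finite because the classical exponent is below 1.\<close>

section \<open>Counting functions and exponents of convergence\<close>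

definition counting_function :: "(nat \<Rightarrow> real) \<Rightarrow> real \<Rightarrow> nat" where
  "counting_function \<rho> t = card {n. \<rho> n \<le> t}"

lemma finite_sublevel_of_filterlim_at_top:
  fixes \<rho> :: "nat \<Rightarrow> real"
  assumes "filterlim \<rho> at_top sequentially"
  shows "finite {n. \<rho> n \<le> t}"
proof -
  have "eventually (\<lambda>n. t < \<rho> n) cofinite"
    using assms unfolding cofinite_eq_sequentially filterlim_at_top_dense by blast
  then show ?thesis
    by (simp add: eventually_cofinite not_less)
qed

lemma summable_powr_of_phi_exponent_less:
  assumes "phi_exponent \<phi> z < ereal \<nu>"
    and "eventually (\<lambda>n. 1 \<le> \<phi> (norm (z n))) sequentially"
  shows "summable (\<lambda>n. \<phi> (norm (z n)) powr (- \<nu>))"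
proof -
  obtain \<mu> where "\<mu> < \<nu>" and summable: "summable (\<lambda>n. \<phi> (norm (z n)) powr (- \<mu>))"
    using assms(1) by (auto simp: phi_exponent_def Inf_less_iff)
  show ?thesis
  proof (rule summable_comparison_test_ev[OF _ summable])
    show "eventually (\<lambda>n. norm (\<phi> (norm (z n)) powr (- \<nu>)) \<le> \<phi> (norm (z n)) powr (- \<mu>))
        sequentially"
      using assms(2) by eventually_elim (use \<open>\<mu> < \<nu>\<close> in \<open>auto intro!: powr_mono\<close>)
  qed
qed

lemma summable_inverse_norm_of_conv_exponent_less_one:
  assumes "conv_exponent z < 1" "\<forall>n. z n \<noteq> 0"
    and lim: "filterlim (\<lambda>n. norm (z n)) at_top sequentially"
  shows "summable (\<lambda>n. 1 / norm (z n))"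
proof -
  have "eventually (\<lambda>n. 1 \<le> norm (z n)) sequentially"
    using lim by (simp add: filterlim_at_top)
  then have "summable (\<lambda>n. norm (z n) powr (- 1))"
    using assms(1)
    by (intro summable_powr_of_phi_exponent_less) (simp_all add: conv_exponent_def one_ereal_def)
  then show ?thesis
    using assms(2) by (simp add: powr_minus divide_inverse)
qed

lemma counting_function_le_of_summable:
  fixes \<phi> \<rho> :: "_ \<Rightarrow> real"
  assumes summable: "summable (\<lambda>n. \<phi> (\<rho> n) powr (- \<nu>))" and "0 \<le> \<nu>"
    and lim: "filterlim \<rho> at_top sequentially"
    and mono: "mono_on {T..} \<phi>" and ge1: "\<forall>t\<ge>T. 1 \<le> \<phi> t"
  shows "\<exists>K\<ge>0. \<forall>t\<ge>T. real (counting_function \<rho> t) \<le> K * \<phi> t powr \<nu>"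
proof (intro exI conjI allI impI)
  define A where "A = {n. \<rho> n \<le> T}"
  define M where "M = (\<Sum>n. \<phi> (\<rho> n) powr (- \<nu>))"
  have "finite A"
    unfolding A_def by (rule finite_sublevel_of_filterlim_at_top[OF lim])
  show "0 \<le> real (card A) + M"
    unfolding M_def using summable by (simp add: suminf_nonneg)
  fix t assume "T \<le> t"
  define B where "B = {n. T < \<rho> n \<and> \<rho> n \<le> t}"
  have "finite B"
    using finite_sublevel_of_filterlim_at_top[OF lim, of t]
    by (rule finite_subset[rotated]) (auto simp: B_def)
  have "1 \<le> \<phi> t"
    using ge1 \<open>T \<le> t\<close> by simp
  have "real (card B) * \<phi> t powr (- \<nu>) = (\<Sum>n\<in>B. \<phi> t powr (- \<nu>))"
    by simp
  also have "\<dots> \<le> (\<Sum>n\<in>B. \<phi> (\<rho> n) powr (- \<nu>))"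
  proof (rule sum_mono)
    fix n assume "n \<in> B"
    then have "1 \<le> \<phi> (\<rho> n)" "\<phi> (\<rho> n) \<le> \<phi> t"
      using ge1 mono_onD[OF mono] by (auto simp: B_def)
    then show "\<phi> t powr (- \<nu>) \<le> \<phi> (\<rho> n) powr (- \<nu>)"
      using \<open>0 \<le> \<nu>\<close> by (intro powr_mono2') auto
  qed
  also have "\<dots> \<le> M"
    unfolding M_def using summable \<open>finite B\<close> by (intro sum_le_suminf) auto
  finally have "real (card B) \<le> M * \<phi> t powr \<nu>"
    using \<open>1 \<le> \<phi> t\<close> by (simp add: powr_minus field_simps)
  moreover have "real (card A) \<le> real (card A) * \<phi> t powr \<nu>"
    using \<open>1 \<le> \<phi> t\<close> \<open>0 \<le> \<nu>\<close> mult_left_mono[of 1 "\<phi> t powr \<nu>" "real (card A)"]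
    by (simp add: ge_one_powr_ge_zero)
  moreover have "card {n. \<rho> n \<le> t} \<le> card A + card B"
    by (rule order_trans[OF card_mono card_Un_le])
      (use \<open>finite A\<close> \<open>finite B\<close> in \<open>auto simp: A_def B_def\<close>)
  ultimately show "real (counting_function \<rho> t) \<le> (real (card A) + M) * \<phi> t powr \<nu>"
    unfolding counting_function_def by (simp add: algebra_simps)
qed

lemma counting_function_le_of_phi_exponent_less:
  assumes "phi_exponent \<phi> z < ereal \<nu>" "0 \<le> \<nu>"
    and lim: "filterlim (\<lambda>n. norm (z n)) at_top sequentially"
    and "mono_on {T..} \<phi>" "\<forall>t\<ge>T. 1 \<le> \<phi> t"
  shows "\<exists>K\<ge>0. \<forall>t\<ge>T. real (counting_function (\<lambda>n. norm (z n)) t) \<le> K * \<phi> t powr \<nu>"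
proof (rule counting_function_le_of_summable[OF summable_powr_of_phi_exponent_less])
  show "eventually (\<lambda>n. 1 \<le> \<phi> (norm (z n))) sequentially"
    using lim assms(5) unfolding filterlim_at_top by (auto elim: eventually_mono[OF spec[of _ T]])
qed (use assms in auto)

section \<open>Growth bounds from the elasticity\<close>

lemma elasticity_le_imp_growth_le:
  fixes g g' :: "real \<Rightarrow> real"
  assumes deriv: "\<And>u. U \<le> u \<Longrightarrow> (g has_real_derivative g' u) (at u)"
    and pos: "\<And>u. U \<le> u \<Longrightarrow> 0 < g u" and "0 < U"
    and elasticity: "\<And>u. U \<le> u \<Longrightarrow> g' u * u / g u \<le> a"
    and "U \<le> x" "x \<le> y"
  shows "g y \<le> g x * (y / x) powr a"
proof -
  let ?h = "\<lambda>u. ln (g u) - a * ln u"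
  have "?h y \<le> ?h x"
  proof (rule deriv_nonpos_imp_antimono[of x y ?h "\<lambda>u. g' u / g u - a / u"])
    fix u assume "u \<in> {x..y}"
    with assms have u: "U \<le> u" "0 < u" "0 < g u" by auto
    show "(?h has_real_derivative g' u / g u - a / u) (at u)"
      using u by (auto intro!: derivative_eq_intros deriv simp: field_simps)
    show "g' u / g u - a / u \<le> 0"
      using elasticity[OF u(1)] u by (simp add: field_simps)
  qed (use assms in auto)
  then have "exp (ln (g y)) \<le> exp (ln (g x) + a * (ln y - ln x))"
    by (simp add: algebra_simps)
  also have "\<dots> = g x * (y / x) powr a"
    using assms pos[of x] by (simp add: exp_add powr_def ln_div)
  finally show ?thesis
    using assms pos[of y] by simp
qed

lemma elasticity_ge_imp_growth_ge:
  fixes g g' :: "real \<Rightarrow> real"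
  assumes deriv: "\<And>u. U \<le> u \<Longrightarrow> (g has_real_derivative g' u) (at u)"
    and pos: "\<And>u. U \<le> u \<Longrightarrow> 0 < g u" and "0 < U"
    and elasticity: "\<And>u. U \<le> u \<Longrightarrow> a \<le> g' u * u / g u"
    and "U \<le> x" "x \<le> y"
  shows "g x * (y / x) powr a \<le> g y"
proof -
  \<comment> \<open>\<open>1 / g\<close> has the negated elasticity of \<open>g\<close>\<close>
  have "1 / g y \<le> 1 / g x * (y / x) powr (- a)"
  proof (rule elasticity_le_imp_growth_le[of U _ "\<lambda>u. - g' u / (g u)\<^sup>2"])
    fix u assume u: "U \<le> u"
    show "((\<lambda>u. 1 / g u) has_real_derivative - g' u / (g u)\<^sup>2) (at u)"
      using pos[OF u] by (auto intro!: derivative_eq_intros deriv[OF u] simp: power2_eq_square)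
    show "- g' u / (g u)\<^sup>2 * u / (1 / g u) \<le> - a"
      using elasticity[OF u] pos[OF u] by (simp add: power2_eq_square field_simps)
  qed (use assms pos in auto)
  then show ?thesis
    using assms pos[of x] pos[of y] by (simp add: powr_minus field_simps)
qed

section \<open>Lower bounds for the canonical product\<close>

lemma ln_norm_one_minus_divide_ge_near:
  fixes w \<zeta> :: complex
  assumes "2 \<le> norm w" "norm \<zeta> \<le> (norm w)\<^sup>2" "\<zeta> \<noteq> 0" "0 \<le> L"
    and outside_disc: "norm \<zeta> powr (- L) < norm (w - \<zeta>)"
  shows "- (2 * (L + 1) * ln (norm w)) \<le> ln (norm (1 - w / \<zeta>))"
proof (cases "1 \<le> norm \<zeta>")
  case True
  have "norm \<zeta> powr (- L - 1) = norm \<zeta> powr (- L) / norm \<zeta>"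
    using \<open>\<zeta> \<noteq> 0\<close> by (simp add: powr_diff)
  also have "\<dots> < norm (w - \<zeta>) / norm \<zeta>"
    using outside_disc \<open>\<zeta> \<noteq> 0\<close> by (simp add: divide_strict_right_mono)
  also have "\<dots> = norm (1 - w / \<zeta>)"
    using \<open>\<zeta> \<noteq> 0\<close> by (simp add: norm_divide[symmetric] diff_divide_distrib norm_minus_commute)
  finally have "ln (norm \<zeta> powr (- L - 1)) \<le> ln (norm (1 - w / \<zeta>))"
    using \<open>\<zeta> \<noteq> 0\<close> by (intro ln_mono) auto
  then have "- (L + 1) * ln (norm \<zeta>) \<le> ln (norm (1 - w / \<zeta>))"
    using \<open>\<zeta> \<noteq> 0\<close> by (simp add: ln_powr)
  moreover have "ln (norm \<zeta>) \<le> 2 * ln (norm w)"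
    using assms ln_mono[of "norm \<zeta>" "(norm w)\<^sup>2"] by (simp add: ln_realpow)
  ultimately show ?thesis
    using \<open>0 \<le> L\<close> mult_left_mono[of "ln (norm \<zeta>)" "2 * ln (norm w)" "L + 1"] by linarith
next
  case False
  have "norm w \<le> norm (w / \<zeta>)"
    using False \<open>\<zeta> \<noteq> 0\<close> assms(1) by (simp add: norm_divide le_divide_eq mult_left_le)
  then have "1 \<le> norm (1 - w / \<zeta>)"
    using norm_triangle_ineq2[of "w / \<zeta>" 1] assms(1) by (simp add: norm_minus_commute)
  moreover have "0 \<le> 2 * (L + 1) * ln (norm w)"
    using assms by simp
  ultimately show ?thesis
    using ln_ge_zero[of "norm (1 - w / \<zeta>)"] by linarith
qed

lemma ln_norm_one_minus_divide_ge_far: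
  fixes w \<zeta> :: complex
  assumes "1 < c" "c * norm w \<le> norm \<zeta>" "0 < norm w"
  shows "- (c / (c - 1) * (norm w / norm \<zeta>)) \<le> ln (norm (1 - w / \<zeta>))"
proof -
  define x where "x = norm w / norm \<zeta>"
  have "0 < norm \<zeta>"
    using assms by (smt (verit) mult_less_cancel_right2)
  then have "0 \<le> x" "x \<le> 1 / c"
    using assms by (auto simp: x_def field_simps)
  then have "(c - 1) / c \<le> 1 - x"
    using assms by (auto simp: field_simps)
  moreover have "0 < (c - 1) / c"
    using assms by simp
  ultimately have "0 < 1 - x"
    by linarith
  have "1 - 1 / (1 - x) \<le> ln (1 - x)"
    using ln_le_minus_one[of "1 / (1 - x)"] \<open>0 < 1 - x\<close> by (simp add: ln_div)
  also have "\<dots> \<le> ln (norm (1 - w / \<zeta>))"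
    using norm_triangle_ineq2[of 1 "w / \<zeta>"] \<open>0 < 1 - x\<close>
    by (intro ln_mono) (auto simp: x_def norm_divide)
  finally have "- (x / (1 - x)) \<le> ln (norm (1 - w / \<zeta>))"
    using \<open>0 < 1 - x\<close> by (simp add: field_simps)
  moreover have "x / (1 - x) \<le> c / (c - 1) * x"
    using frac_le[OF \<open>0 \<le> x\<close> order_refl _ \<open>(c - 1) / c \<le> 1 - x\<close>] assms by (simp add: ac_simps)
  ultimately show ?thesis
    unfolding x_def by linarith
qed

lemma ln_inverse_norm_prodinf_le:
  fixes f :: "nat \<Rightarrow> complex"
  assumes "convergent_prod f" "\<forall>n. f n \<noteq> 0"
    and partial_sums: "\<forall>N. - B \<le> (\<Sum>n\<le>N. ln (norm (f n)))"
  shows "ln (1 / norm (\<Prod>n. f n)) \<le> B"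
proof -
  have "(\<lambda>N. norm (\<Prod>n\<le>N. f n)) \<longlonglongrightarrow> norm (\<Prod>n. f n)"
    using assms(1) by (intro tendsto_norm convergent_prod_LIMSEQ)
  moreover have "exp (- B) \<le> norm (\<Prod>n\<le>N. f n)" for N
  proof -
    have "exp (- B) \<le> exp (\<Sum>n\<le>N. ln (norm (f n)))"
      using partial_sums by simp
    also have "\<dots> = norm (\<Prod>n\<le>N. f n)"
      using assms(2) by (simp add: exp_sum prod_norm)
    finally show ?thesis .
  qed
  ultimately have lower: "exp (- B) \<le> norm (\<Prod>n. f n)"
    by (intro LIMSEQ_le_const) auto
  then have "- B \<le> ln (norm (\<Prod>n. f n))"
    by (metis exp_gt_zero ln_exp ln_le_cancel_iff order_less_le_trans)
  moreover have "0 < norm (\<Prod>n. f n)"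
    using lower by (smt (verit) exp_gt_zero)
  ultimately show ?thesis
    by (simp add: ln_div)
qed

lemma sum_ln_norm_one_minus_divide_ge:
  fixes z :: "nat \<Rightarrow> complex" and w :: complex
  assumes z_nz: "\<forall>n. z n \<noteq> 0"
    and lim: "filterlim (\<lambda>n. norm (z n)) at_top sequentially"
    and "2 \<le> norm w" "0 \<le> L" "1 < c" "c * norm w \<le> S" "S \<le> (norm w)\<^sup>2"
    and outside_discs: "\<forall>n. norm (z n) powr (- L) < norm (w - z n)"
    and near: "real (counting_function (\<lambda>n. norm (z n)) S) \<le> N"
    and far: "\<forall>F. finite F \<longrightarrow> (\<forall>n\<in>F. S < norm (z n)) \<longrightarrow> (\<Sum>n\<in>F. norm w / norm (z n)) \<le> M"
    and "finite A"
  shows "- (2 * (L + 1) * ln (norm w) * N + c / (c - 1) * M) \<le> (\<Sum>n\<in>A. ln (norm (1 - w / z n)))"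
proof -
  let ?f = "\<lambda>n. 1 - w / z n"
  define I where "I = A \<inter> {n. norm (z n) \<le> S}"
  define J where "J = A - {n. norm (z n) \<le> S}"
  have "card I \<le> counting_function (\<lambda>n. norm (z n)) S"
    unfolding counting_function_def I_def
    by (intro card_mono finite_sublevel_of_filterlim_at_top[OF lim]) auto
  then have "real (card I) * (2 * (L + 1) * ln (norm w)) \<le> N * (2 * (L + 1) * ln (norm w))"
    using near assms by (intro mult_right_mono) auto
  moreover have "- (2 * (L + 1) * ln (norm w)) \<le> ln (norm (?f n))" if "n \<in> I" for n
    using that assms by (intro ln_norm_one_minus_divide_ge_near) (auto simp: I_def)
  then have "real (card I) * - (2 * (L + 1) * ln (norm w)) \<le> (\<Sum>n\<in>I. ln (norm (?f n)))"
    using sum_mono[of I "\<lambda>_. - (2 * (L + 1) * ln (norm w))"] by simp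
  moreover have "- (c / (c - 1) * (norm w / norm (z n))) \<le> ln (norm (?f n))" if "n \<in> J" for n
    using that assms by (intro ln_norm_one_minus_divide_ge_far) (auto simp: J_def)
  then have "(\<Sum>n\<in>J. - (c / (c - 1) * (norm w / norm (z n)))) \<le> (\<Sum>n\<in>J. ln (norm (?f n)))"
    by (rule sum_mono)
  then have "- (c / (c - 1) * (\<Sum>n\<in>J. norm w / norm (z n))) \<le> (\<Sum>n\<in>J. ln (norm (?f n)))"
    by (simp only: sum_negf sum_distrib_left)
  moreover have "c / (c - 1) * (\<Sum>n\<in>J. norm w / norm (z n)) \<le> c / (c - 1) * M"
    using far assms by (intro mult_left_mono) (auto simp: J_def)
  moreover have "(\<Sum>n\<in>A. ln (norm (?f n))) = (\<Sum>n\<in>I. ln (norm (?f n))) + (\<Sum>n\<in>J. ln (norm (?f n)))"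
    unfolding I_def J_def using \<open>finite A\<close> by (rule sum.Int_Diff)
  ultimately show ?thesis
    by (simp add: algebra_simps)
qed

lemma ln_inverse_canonical_product_le:
  fixes z :: "nat \<Rightarrow> complex" and w :: complex
  assumes z_nz: "\<forall>n. z n \<noteq> 0"
    and lim: "filterlim (\<lambda>n. norm (z n)) at_top sequentially"
    and summable: "summable (\<lambda>n. 1 / norm (z n))"
    and "2 \<le> norm w" "0 \<le> L" "1 < c" "c * norm w \<le> S" "S \<le> (norm w)\<^sup>2"
    and outside_discs: "\<forall>n. norm (z n) powr (- L) < norm (w - z n)"
    and near: "real (counting_function (\<lambda>n. norm (z n)) S) \<le> N"
    and far: "\<forall>F. finite F \<longrightarrow> (\<forall>n\<in>F. S < norm (z n)) \<longrightarrow> (\<Sum>n\<in>F. norm w / norm (z n)) \<le> M"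
  shows "ln (1 / norm (canonical_product z w)) \<le> 2 * (L + 1) * ln (norm w) * N + c / (c - 1) * M"
  unfolding canonical_product_def
proof (rule ln_inverse_norm_prodinf_le)
  have "summable (\<lambda>n. norm ((1 - w / z n) - 1))"
    using summable_mult[OF summable, of "norm w"] by (simp add: norm_divide)
  then show "convergent_prod (\<lambda>n. 1 - w / z n)"
    by (intro abs_convergent_prod_imp_convergent_prod summable_imp_abs_convergent_prod)
  have "w \<noteq> z n" for n
    using outside_discs[rule_format, of n] by auto
  then show "\<forall>n. 1 - w / z n \<noteq> 0"
    using z_nz by simp
  show "\<forall>K. - (2 * (L + 1) * ln (norm w) * N + c / (c - 1) * M) \<le> (\<Sum>n\<le>K. ln (norm (1 - w / z n)))"
    using assms by (intro allI sum_ln_norm_one_minus_divide_ge) auto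
qed

lemma ln_inverse_canonical_product_bound:
  fixes z :: "nat \<Rightarrow> complex" and s G :: "real \<Rightarrow> real"
  assumes z_nz: "\<forall>n. z n \<noteq> 0"
    and lim: "filterlim (\<lambda>n. norm (z n)) at_top sequentially"
    and summable: "summable (\<lambda>n. 1 / norm (z n))"
    and "0 \<le> L" "1 < c" "0 \<le> M" "\<forall>r. 0 \<le> G r"
    and "eventually (\<lambda>r. c * r \<le> s r) at_top" "eventually (\<lambda>r. s r \<le> r\<^sup>2) at_top"
    and near: "eventually (\<lambda>r. real (counting_function (\<lambda>n. norm (z n)) (s r)) \<le> K * G r) at_top"
    and far: "eventually (\<lambda>r. \<forall>F. finite F \<longrightarrow> (\<forall>n\<in>F. s r < norm (z n)) \<longrightarrow>
               (\<Sum>n\<in>F. r / norm (z n)) \<le> M * G r) at_top"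
  shows "\<exists>C R. \<forall>w. R \<le> norm w \<and> (\<forall>n. norm (z n) powr (- L) < norm (w - z n)) \<longrightarrow>
           ln (1 / norm (canonical_product z w)) \<le> C * G (norm w) * ln (norm w)"
proof -
  have "eventually (\<lambda>r. c * r \<le> s r \<and> s r \<le> r\<^sup>2 \<and>
      real (counting_function (\<lambda>n. norm (z n)) (s r)) \<le> K * G r \<and>
      (\<forall>F. finite F \<longrightarrow> (\<forall>n\<in>F. s r < norm (z n)) \<longrightarrow> (\<Sum>n\<in>F. r / norm (z n)) \<le> M * G r)) at_top"
    using assms(8,9) near far by (intro eventually_conj)
  then obtain U where U: "\<forall>r\<ge>U. c * r \<le> s r \<and> s r \<le> r\<^sup>2 \<and>
      real (counting_function (\<lambda>n. norm (z n)) (s r)) \<le> K * G r \<and>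
      (\<forall>F. finite F \<longrightarrow> (\<forall>n\<in>F. s r < norm (z n)) \<longrightarrow> (\<Sum>n\<in>F. r / norm (z n)) \<le> M * G r)"
    unfolding eventually_at_top_linorder by blast
  define C where "C = 2 * (L + 1) * K + c / (c - 1) * M"
  have "ln (1 / norm (canonical_product z w)) \<le> C * G (norm w) * ln (norm w)"
    if w: "max (max 2 (exp 1)) U \<le> norm w" "\<forall>n. norm (z n) powr (- L) < norm (w - z n)" for w
  proof -
    have "1 \<le> ln (norm w)"
      using w by (subst ln_ge_iff) auto
    have "ln (1 / norm (canonical_product z w))
        \<le> 2 * (L + 1) * ln (norm w) * (K * G (norm w)) + c / (c - 1) * (M * G (norm w))"
      using w U assms by (intro ln_inverse_canonical_product_le[where S = "s (norm w)"]) auto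
    also have "\<dots> \<le> C * G (norm w) * ln (norm w)"
      using \<open>1 \<le> ln (norm w)\<close> assms
        mult_left_mono[of 1 "ln (norm w)" "c / (c - 1) * (M * G (norm w))"]
      by (simp add: C_def algebra_simps)
    finally show ?thesis .
  qed
  then show ?thesis
    by blast
qed

section \<open>Sums over the far zeros\<close>

lemma divide_le_dyadic_indicator_sum:
  fixes s :: "real \<Rightarrow> real"
  assumes "0 < r" and s_gt: "\<forall>u\<ge>r. u < s u" and "s r < x" "x \<le> s (2 ^ J * r)"
  shows "r / x \<le> 2 * (\<Sum>k\<le>J. (1 / 2) ^ k * of_bool (x \<le> s (2 ^ k * r)))"
proof -
  define j where "j = (LEAST j. x \<le> s (2 ^ j * r))"
  have "x \<le> s (2 ^ j * r)" "j \<le> J"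
    unfolding j_def using assms(4) by (auto intro: LeastI Least_le)
  moreover have "j \<noteq> 0"
  proof
    assume "j = 0"
    then show False
      using \<open>x \<le> s (2 ^ j * r)\<close> \<open>s r < x\<close> by simp
  qed
  then obtain i where "j = Suc i"
    using not0_implies_Suc by blast
  then have "s (2 ^ i * r) < x"
    using not_less_Least[of i "\<lambda>j. x \<le> s (2 ^ j * r)"] unfolding j_def by auto
  moreover have "2 ^ i * r < s (2 ^ i * r)"
    using s_gt \<open>0 < r\<close> by (simp add: mult_le_cancel_right1)
  ultimately have "2 ^ i * r < x"
    by linarith
  moreover have "0 < x"
    using \<open>2 ^ i * r < x\<close> \<open>0 < r\<close> by (smt (verit) zero_less_power mult_pos_pos)
  ultimately have "r / x < r / (2 ^ i * r)"
    using \<open>0 < r\<close> by (intro divide_strict_left_mono) auto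
  also have "\<dots> = 2 * ((1 / 2) ^ j * of_bool (x \<le> s (2 ^ j * r)))"
    using \<open>0 < r\<close> \<open>j = Suc i\<close> \<open>x \<le> s (2 ^ j * r)\<close> by (simp add: power_divide)
  also have "\<dots> \<le> 2 * (\<Sum>k\<le>J. (1 / 2) ^ k * of_bool (x \<le> s (2 ^ k * r)))"
    using \<open>j \<le> J\<close>
    by (intro mult_left_mono member_le_sum[where f = "\<lambda>k. (1 / 2) ^ k * of_bool (x \<le> s (2 ^ k * r))"])
      auto
  finally show ?thesis
    by simp
qed

lemma tail_sum_le_of_dyadic_counts:
  fixes s \<rho> :: "_ \<Rightarrow> real"
  assumes "0 < r" and s_gt: "\<forall>u\<ge>r. u < s u"
    and lim: "filterlim \<rho> at_top sequentially"
    and counts: "\<forall>k. real (counting_function \<rho> (s (2 ^ k * r))) \<le> B * q ^ k"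
    and "0 \<le> q" "q < 2"
    and F: "finite F" "\<forall>n\<in>F. s r < \<rho> n"
  shows "(\<Sum>n\<in>F. r / \<rho> n) \<le> 2 * B / (1 - q / 2)"
proof -
  let ?level = "\<lambda>n k. of_bool (\<rho> n \<le> s (2 ^ k * r)) :: real"
  obtain J :: nat where J: "(\<Sum>n\<in>F. \<rho> n) < 2 ^ J * r"
    using real_arch_pow[of 2 "(\<Sum>n\<in>F. \<rho> n) / r"] \<open>0 < r\<close> by (auto simp: divide_less_eq)
  have "\<forall>n\<in>F. 0 < \<rho> n"
    using F s_gt \<open>0 < r\<close> by force
  have "\<rho> n \<le> s (2 ^ J * r)" if "n \<in> F" for n
  proof -
    have "\<rho> n \<le> (\<Sum>n\<in>F. \<rho> n)"
      using F(1) \<open>\<forall>n\<in>F. 0 < \<rho> n\<close> that by (intro member_le_sum) (auto intro: less_imp_le)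
    also have "\<dots> \<le> s (2 ^ J * r)"
      using J s_gt \<open>0 < r\<close> by (smt (verit) one_le_power mult_le_cancel_right1)
    finally show ?thesis .
  qed
  then have "(\<Sum>n\<in>F. r / \<rho> n) \<le> (\<Sum>n\<in>F. 2 * (\<Sum>k\<le>J. (1 / 2) ^ k * ?level n k))"
    using F by (intro sum_mono divide_le_dyadic_indicator_sum[OF \<open>0 < r\<close> s_gt]) auto
  also have "\<dots> = 2 * (\<Sum>k\<le>J. (1 / 2) ^ k * (\<Sum>n\<in>F. ?level n k))"
    by (simp only: sum_distrib_left sum.swap[of _ F])
  also have "\<dots> \<le> 2 * (\<Sum>k\<le>J. (1 / 2) ^ k * (B * q ^ k))"
  proof -
    have "(\<Sum>n\<in>F. ?level n k) \<le> real (counting_function \<rho> (s (2 ^ k * r)))" for k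
      unfolding counting_function_def using F(1)
      by (simp only: sum_of_bool_eq)
        (intro of_nat_mono card_mono finite_sublevel_of_filterlim_at_top[OF lim]; auto)
    then show ?thesis
      using counts by (intro mult_left_mono sum_mono) (auto intro: order_trans)
  qed
  also have "\<dots> = 2 * B * (\<Sum>k\<le>J. (q / 2) ^ k)"
    by (simp add: sum_distrib_left power_divide mult.assoc)
  also have "\<dots> \<le> 2 * B * (\<Sum>k. (q / 2) ^ k)"
    using counts[rule_format, of 0] \<open>0 \<le> q\<close> \<open>q < 2\<close>
    by (intro mult_left_mono sum_le_suminf summable_geometric) auto
  also have "\<dots> = 2 * B / (1 - q / 2)"
    using \<open>0 \<le> q\<close> \<open>q < 2\<close> by (simp add: suminf_geometric)
  finally show ?thesis .
qed

lemma tail_sum_le_of_slow_growth: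
  fixes \<rho> :: "nat \<Rightarrow> real" and g s :: "real \<Rightarrow> real"
  assumes lim: "filterlim \<rho> at_top sequentially"
    and "0 < U" and s_gt: "\<forall>u\<ge>U. u < s u" and g_pos: "\<forall>u\<ge>U. 0 < g u"
    and growth: "\<forall>x y. U \<le> x \<longrightarrow> x \<le> y \<longrightarrow> g y \<le> g x * (y / x) powr a"
    and counts: "\<forall>y\<ge>U. real (counting_function \<rho> (s y)) \<le> K * g y powr \<nu>"
    and "0 \<le> K" "0 \<le> \<nu>" "a * \<nu> < 1"
  shows "\<exists>C\<ge>0. \<forall>r\<ge>U. \<forall>F. finite F \<longrightarrow> (\<forall>n\<in>F. s r < \<rho> n) \<longrightarrow>
           (\<Sum>n\<in>F. r / \<rho> n) \<le> C * g r powr \<nu>"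
proof (intro exI conjI allI impI)
  define q where "q = 2 powr (a * \<nu>)"
  have "0 \<le> q" "q < 2"
    using \<open>a * \<nu> < 1\<close> powr_less_mono[of "a * \<nu>" 1 2] by (auto simp: q_def)
  then show "0 \<le> 2 * K / (1 - q / 2)"
    using \<open>0 \<le> K\<close> by simp
  fix r and F :: "nat set" assume "U \<le> r" "finite F" "\<forall>n\<in>F. s r < \<rho> n"
  have "real (counting_function \<rho> (s (2 ^ k * r))) \<le> (K * g r powr \<nu>) * q ^ k" for k
  proof -
    have "r \<le> 2 ^ k * r"
      using \<open>0 < U\<close> \<open>U \<le> r\<close> by simp
    then have "g (2 ^ k * r) \<le> g r * (2 ^ k * r / r) powr a"
      using growth \<open>U \<le> r\<close> by blast
    also have "(2 ^ k * r / r) powr a = 2 powr (real k * a)"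
      using \<open>0 < U\<close> \<open>U \<le> r\<close> by (simp add: powr_powr powr_realpow[symmetric])
    finally have "g (2 ^ k * r) powr \<nu> \<le> (g r * 2 powr (real k * a)) powr \<nu>"
      using g_pos \<open>U \<le> r\<close> \<open>r \<le> 2 ^ k * r\<close> \<open>0 \<le> \<nu>\<close>
      by (intro powr_mono2) (auto intro: less_imp_le)
    also have "\<dots> = g r powr \<nu> * q ^ k"
      using g_pos \<open>U \<le> r\<close>
      by (simp add: q_def powr_mult powr_powr powr_realpow[symmetric] mult_ac)
    finally show ?thesis
      using counts \<open>U \<le> r\<close> \<open>r \<le> 2 ^ k * r\<close> \<open>0 \<le> K\<close>
      by (smt (verit) mult.assoc mult_left_mono)
  qed
  then show "(\<Sum>n\<in>F. r / \<rho> n) \<le> 2 * K / (1 - q / 2) * g r powr \<nu>"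
    using tail_sum_le_of_dyadic_counts[of r s \<rho> "K * g r powr \<nu>" q F] \<open>0 < U\<close> \<open>U \<le> r\<close> s_gt lim
      \<open>0 \<le> q\<close> \<open>q < 2\<close> \<open>finite F\<close> \<open>\<forall>n\<in>F. s r < \<rho> n\<close>
    by auto
qed

lemma tail_sum_le_of_fast_growth:
  fixes \<rho> :: "nat \<Rightarrow> real" and g :: "real \<Rightarrow> real"
  assumes summable: "summable (\<lambda>n. 1 / \<rho> n)" and \<rho>_pos: "\<forall>n. 0 < \<rho> n"
    and "1 \<le> U" "0 < g U" and growth: "\<forall>y\<ge>U. g U * (y / U) powr b \<le> g y"
    and "0 \<le> L" "1 \<le> b * L"
  shows "\<exists>C\<ge>0. \<forall>r\<ge>U. \<forall>F. finite F \<longrightarrow> (\<Sum>n\<in>F. r / \<rho> n) \<le> C * g r powr L"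
proof (intro exI conjI allI impI)
  define \<kappa> where "\<kappa> = (U powr b / g U) powr L"
  show "0 \<le> \<kappa> * (\<Sum>n. 1 / \<rho> n)"
    using summable \<rho>_pos by (intro mult_nonneg_nonneg suminf_nonneg) (auto simp: \<kappa>_def less_imp_le)
  fix r and F :: "nat set" assume "U \<le> r" "finite F"
  then have "1 \<le> r" "0 < g r"
    using \<open>1 \<le> U\<close> \<open>0 < g U\<close> growth
    by (auto intro: order_less_le_trans[of 0 "g U * (r / U) powr b"])
  have "r \<le> r powr (b * L)"
    using \<open>1 \<le> r\<close> \<open>1 \<le> b * L\<close> powr_mono[of 1 "b * L" r] by simp
  also have "\<dots> = (U powr b * (r / U) powr b) powr L"
    using \<open>1 \<le> U\<close> by (simp add: powr_powr powr_mult[symmetric])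
  also have "\<dots> \<le> (U powr b * (g r / g U)) powr L"
    using growth \<open>U \<le> r\<close> \<open>0 < g U\<close> \<open>0 \<le> L\<close>
    by (intro powr_mono2 mult_left_mono) (auto simp: field_simps)
  also have "\<dots> = \<kappa> * g r powr L"
    using \<open>0 < g r\<close> \<open>0 < g U\<close> by (simp add: \<kappa>_def powr_mult powr_divide)
  finally have "r \<le> \<kappa> * g r powr L" .
  have "(\<Sum>n\<in>F. r / \<rho> n) = r * (\<Sum>n\<in>F. 1 / \<rho> n)"
    by (simp add: sum_distrib_left)
  also have "\<dots> \<le> r * (\<Sum>n. 1 / \<rho> n)"
    using summable \<open>finite F\<close> \<rho>_pos \<open>1 \<le> r\<close>
    by (intro mult_left_mono sum_le_suminf) (auto intro: less_imp_le)
  also have "\<dots> \<le> \<kappa> * g r powr L * (\<Sum>n. 1 / \<rho> n)"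
    using \<open>r \<le> \<kappa> * g r powr L\<close> summable \<rho>_pos
    by (intro mult_right_mono suminf_nonneg) (auto intro: less_imp_le)
  finally show "(\<Sum>n\<in>F. r / \<rho> n) \<le> (\<kappa> * (\<Sum>n. 1 / \<rho> n)) * g r powr L"
    by (simp add: mult_ac)
qed

lemma Limsup_less_inverse_obtain:
  fixes f :: "'a \<Rightarrow> ereal" and lam :: real
  assumes "Limsup F f < inverse (ereal lam)" "0 \<le> lam"
  obtains a where "0 < a" "a * lam < 1" "eventually (\<lambda>x. f x < ereal a) F"
proof -
  have "0 < inverse (ereal lam)"
    using \<open>0 \<le> lam\<close> by (cases "lam = 0") auto
  then have "max (Limsup F f) 0 < inverse (ereal lam)"
    using assms(1) by simp
  then obtain a where a: "max (Limsup F f) 0 < ereal a" "ereal a < inverse (ereal lam)"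
    using ereal_dense2 by blast
  have "a * lam < 1"
  proof (cases "lam = 0")
    case False
    then show ?thesis
      using a(2) \<open>0 \<le> lam\<close> by (simp add: field_simps)
  qed simp
  moreover have "eventually (\<lambda>x. f x < ereal a) F"
    using a(1) by (intro Limsup_lessD) simp
  moreover have "0 < a"
    using a(1) by simp
  ultimately show ?thesis
    using that by blast
qed

lemma tail_sum_le_of_Limsup_elasticity:
  fixes \<rho> :: "nat \<Rightarrow> real" and g g' s :: "real \<Rightarrow> real"
  assumes lim: "filterlim \<rho> at_top sequentially"
    and "0 < T" and s_gt: "\<forall>u\<ge>T. u < s u"
    and g_deriv: "\<forall>u\<ge>T. (g has_real_derivative g' u) (at u)" and g_ge1: "\<forall>u\<ge>T. 1 \<le> g u"
    and counts: "\<forall>\<nu>>lam. \<exists>K\<ge>0. \<forall>y\<ge>T. real (counting_function \<rho> (s y)) \<le> K * g y powr \<nu>"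
    and "0 \<le> lam" "lam < L"
    and elasticity: "Limsup at_top (\<lambda>u. ereal (g' u * u / g u)) < inverse (ereal lam)"
  shows "\<exists>C\<ge>0. \<exists>U. \<forall>r\<ge>U. \<forall>F. finite F \<longrightarrow> (\<forall>n\<in>F. s r < \<rho> n) \<longrightarrow>
           (\<Sum>n\<in>F. r / \<rho> n) \<le> C * g r powr L"
proof -
  obtain a where "0 < a" "a * lam < 1" and "eventually (\<lambda>u. g' u * u / g u < a) at_top"
    using Limsup_less_inverse_obtain[OF elasticity \<open>0 \<le> lam\<close>] by auto
  then obtain U0 where U0: "\<forall>u\<ge>U0. g' u * u / g u < a"
    unfolding eventually_at_top_linorder by blast
  define U where "U = max T U0"
  have "U \<ge> T" and U: "\<forall>u\<ge>U. g' u * u / g u < a"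
    using U0 by (auto simp: U_def)
  have growth: "\<forall>x y. U \<le> x \<longrightarrow> x \<le> y \<longrightarrow> g y \<le> g x * (y / x) powr a"
    using U \<open>U \<ge> T\<close> \<open>0 < T\<close> g_deriv g_ge1
    by (intro allI impI elasticity_le_imp_growth_le[of U g g'])
      (auto intro: less_imp_le order_less_le_trans[OF zero_less_one])
  define \<nu> where "\<nu> = min L ((lam + 1 / a) / 2)"
  have "lam < 1 / a"
    using \<open>0 < a\<close> \<open>a * lam < 1\<close> by (simp add: field_simps)
  then have "lam < \<nu>" "\<nu> \<le> L" "a * \<nu> < 1"
    using \<open>lam < L\<close> \<open>0 < a\<close> by (auto simp: \<nu>_def min_def field_simps)
  then obtain K where "0 \<le> K" "\<forall>y\<ge>T. real (counting_function \<rho> (s y)) \<le> K * g y powr \<nu>"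
    using counts by blast
  then have "\<exists>C\<ge>0. \<forall>r\<ge>U. \<forall>F. finite F \<longrightarrow> (\<forall>n\<in>F. s r < \<rho> n) \<longrightarrow>
               (\<Sum>n\<in>F. r / \<rho> n) \<le> C * g r powr \<nu>"
    using \<open>U \<ge> T\<close> \<open>0 < T\<close> s_gt g_ge1 \<open>lam < \<nu>\<close> \<open>0 \<le> lam\<close> \<open>a * \<nu> < 1\<close>
    by (intro tail_sum_le_of_slow_growth[OF lim _ _ _ growth])
      (auto intro: order_less_le_trans[OF zero_less_one])
  then obtain C where "0 \<le> C"
    and C: "\<forall>r\<ge>U. \<forall>F. finite F \<longrightarrow> (\<forall>n\<in>F. s r < \<rho> n) \<longrightarrow> (\<Sum>n\<in>F. r / \<rho> n) \<le> C * g r powr \<nu>"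
    by blast
  have "C * g r powr \<nu> \<le> C * g r powr L" if "U \<le> r" for r
    using that \<open>U \<ge> T\<close> g_ge1 \<open>\<nu> \<le> L\<close> \<open>0 \<le> C\<close> by (intro mult_left_mono powr_mono) auto
  then show ?thesis
    using C \<open>0 \<le> C\<close> by (meson order_trans)
qed

lemma tail_sum_le_of_Liminf_elasticity:
  fixes \<rho> :: "nat \<Rightarrow> real" and g g' :: "real \<Rightarrow> real"
  assumes summable: "summable (\<lambda>n. 1 / \<rho> n)" and \<rho>_pos: "\<forall>n. 0 < \<rho> n"
    and "0 < T" and g_deriv: "\<forall>u\<ge>T. (g has_real_derivative g' u) (at u)" and g_ge1: "\<forall>u\<ge>T. 1 \<le> g u"
    and "0 \<le> lam" "lam < L"
    and elasticity: "inverse (ereal lam) \<le> Liminf at_top (\<lambda>u. ereal (g' u * u / g u))"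
  shows "\<exists>C\<ge>0. \<exists>U. \<forall>r\<ge>U. \<forall>F. finite F \<longrightarrow> (\<Sum>n\<in>F. r / \<rho> n) \<le> C * g r powr L"
proof -
  have "ereal (1 / L) < inverse (ereal lam)"
    using \<open>0 \<le> lam\<close> \<open>lam < L\<close> by (cases "lam = 0") (auto simp: field_simps)
  then have "ereal (1 / L) < Liminf at_top (\<lambda>u. ereal (g' u * u / g u))"
    using elasticity by (rule order_less_le_trans)
  then have "eventually (\<lambda>u. 1 / L < g' u * u / g u) at_top"
    using less_LiminfD by fastforce
  then obtain U0 where U0: "\<forall>u\<ge>U0. 1 / L < g' u * u / g u"
    unfolding eventually_at_top_linorder by blast
  define U where "U = max (max T 1) U0"
  have "U \<ge> max T 1" and U: "\<forall>u\<ge>U. 1 / L < g' u * u / g u"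
    using U0 by (auto simp: U_def)
  then have "\<forall>y\<ge>U. g U * (y / U) powr (1 / L) \<le> g y"
    using \<open>0 < T\<close> g_deriv g_ge1
    by (intro allI impI elasticity_ge_imp_growth_ge[of U g g'])
      (auto intro: less_imp_le order_less_le_trans[OF zero_less_one])
  then have "\<exists>C\<ge>0. \<forall>r\<ge>U. \<forall>F. finite F \<longrightarrow> (\<Sum>n\<in>F. r / \<rho> n) \<le> C * g r powr L"
    using \<open>U \<ge> max T 1\<close> g_ge1 \<open>0 \<le> lam\<close> \<open>lam < L\<close>
    by (intro tail_sum_le_of_fast_growth[OF summable \<rho>_pos])
      (auto intro: order_less_le_trans[OF zero_less_one])
  then show ?thesis
    by blast
qed

lemma tail_sum_le_of_elasticity_dichotomy:
  fixes \<rho> :: "nat \<Rightarrow> real" and \<phi> s :: "real \<Rightarrow> real"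
  assumes lim: "filterlim \<rho> at_top sequentially" and \<rho>_pos: "\<forall>n. 0 < \<rho> n"
    and summable: "summable (\<lambda>n. 1 / \<rho> n)"
    and "0 < T" and s_gt: "\<forall>u\<ge>T. u < s u" and \<phi>_ge1: "\<forall>t\<ge>T. 1 \<le> \<phi> t"
    and \<phi>_diff: "\<forall>t\<ge>T. \<phi> differentiable (at t)" and s_diff: "\<forall>u\<ge>T. s differentiable (at u)"
    and counts: "\<forall>\<nu>>lam. \<exists>K\<ge>0. \<forall>t\<ge>T. real (counting_function \<rho> t) \<le> K * \<phi> t powr \<nu>"
    and "0 \<le> lam" "lam < L"
    and dichotomy:
      "Limsup at_top (\<lambda>u. ereal (deriv \<phi> (s u) * deriv s u * u / \<phi> (s u))) < inverse (ereal lam) \<or>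
       inverse (ereal lam) \<le> Liminf at_top (\<lambda>u. ereal (deriv \<phi> (s u) * deriv s u * u / \<phi> (s u)))"
  shows "\<exists>C\<ge>0. eventually (\<lambda>r. \<forall>F. finite F \<longrightarrow> (\<forall>n\<in>F. s r < \<rho> n) \<longrightarrow>
           (\<Sum>n\<in>F. r / \<rho> n) \<le> C * \<phi> (s r) powr L) at_top"
proof -
  have deriv: "\<forall>u\<ge>T. ((\<lambda>u. \<phi> (s u)) has_real_derivative deriv \<phi> (s u) * deriv s u) (at u)"
    using \<phi>_diff s_diff s_gt
    by (auto intro!: DERIV_chain2[of \<phi>] simp: DERIV_deriv_iff_real_differentiable)
  have g_ge1: "\<forall>u\<ge>T. 1 \<le> \<phi> (s u)"
    using \<phi>_ge1 s_gt by (meson less_imp_le order_trans)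
  have g_counts: "\<forall>\<nu>>lam. \<exists>K\<ge>0. \<forall>u\<ge>T. real (counting_function \<rho> (s u)) \<le> K * \<phi> (s u) powr \<nu>"
    using counts s_gt by (meson less_imp_le order_trans)
  from dichotomy show ?thesis
  proof
    assume "Limsup at_top (\<lambda>u. ereal (deriv \<phi> (s u) * deriv s u * u / \<phi> (s u)))
      < inverse (ereal lam)"
    then show ?thesis
      unfolding eventually_at_top_linorder
      by (rule tail_sum_le_of_Limsup_elasticity[OF lim \<open>0 < T\<close> s_gt deriv g_ge1 g_counts
            \<open>0 \<le> lam\<close> \<open>lam < L\<close>])
  next
    assume "inverse (ereal lam)
      \<le> Liminf at_top (\<lambda>u. ereal (deriv \<phi> (s u) * deriv s u * u / \<phi> (s u)))"
    then have "\<exists>C\<ge>0. \<exists>U. \<forall>r\<ge>U. \<forall>F. finite F \<longrightarrow> (\<Sum>n\<in>F. r / \<rho> n) \<le> C * \<phi> (s r) powr L"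
      by (rule tail_sum_le_of_Liminf_elasticity[OF summable \<rho>_pos \<open>0 < T\<close> deriv g_ge1
            \<open>0 \<le> lam\<close> \<open>lam < L\<close>])
    then show ?thesis
      unfolding eventually_at_top_linorder by blast
  qed
qed

lemma Liminf_ratio_gt_one_obtain:
  fixes s :: "real \<Rightarrow> real"
  assumes "1 < Liminf at_top (\<lambda>r. ereal (s r / r))"
  obtains c where "1 < c" "eventually (\<lambda>r. c * r \<le> s r) at_top"
proof -
  obtain c where c: "1 < ereal c" "ereal c < Liminf at_top (\<lambda>r. ereal (s r / r))"
    using ereal_dense2[OF assms] by blast
  then have "eventually (\<lambda>r. c < s r / r \<and> 0 < r) at_top"
    by (intro eventually_conj eventually_gt_at_top) (auto dest: less_LiminfD)
  then have "eventually (\<lambda>r. c * r \<le> s r) at_top"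
    by eventually_elim (auto simp: field_simps)
  then show ?thesis
    using that c(1) by simp
qed

theorem lemma4p5:
  fixes R0 :: real and \<phi> s :: "real \<Rightarrow> real" and z :: "nat \<Rightarrow> complex"
    and lam \<epsilon> :: real
  assumes R0: "R0 > 0"
    and phi_pos: "\<forall>r>R0. \<phi> r > 0"
    and phi_mono: "mono_on {R0<..} \<phi>"
    and phi_unbdd: "\<not> bdd_above (\<phi> ` {R0<..})"
    and phi_bounds: "\<forall>r>R0. ln r \<le> \<phi> r \<and> \<phi> r \<le> r"
    and s_pos: "\<forall>r>R0. s r > 0"
    and s_mono: "mono_on {R0<..} s"
    and s_bounds: "\<forall>r>R0. r < s r \<and> s r \<le> r\<^sup>2"
    and s_liminf: "Liminf at_top (\<lambda>r. ereal (s r / r)) > 1"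
    and z_nz: "\<forall>n. z n \<noteq> 0"
    and z_inf: "filterlim (\<lambda>n. norm (z n)) at_top sequentially"
    and z_exp: "conv_exponent z < 1"
    and lam: "phi_exponent \<phi> z = ereal lam"
    and lam_nonneg: "lam \<ge> 0"
    and phi_diff: "\<forall>r>R0. \<phi> differentiable (at r)"
    and s_diff: "\<forall>r>R0. s differentiable (at r)"
    and s_deriv: "Limsup at_top (\<lambda>r. ereal (r\<^sup>2 * deriv s r / (s r)\<^sup>2)) < \<infinity>"
    and cond: "let Q = (\<lambda>r. ereal (deriv \<phi> (s r) * deriv s r * r / \<phi> (s r)));
                    inv_lam = (if lam = 0 then \<infinity> else ereal (1 / lam))
               in Limsup at_top Q < inv_lam \<or> Liminf at_top Q \<ge> inv_lam"
    and eps: "\<epsilon> > 0"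
  shows "\<exists>C R. \<forall>w::complex. norm w \<ge> R \<and>
            (\<forall>n. norm (w - z n) > norm (z n) powr (- (lam + \<epsilon>))) \<longrightarrow>
            ln (1 / norm (canonical_product z w))
              \<le> C * \<phi> (s (norm w)) powr (lam + \<epsilon>) * ln (norm w)"
proof -
  define L where "L = lam + \<epsilon>"
  define T where "T = max (R0 + 1) (exp 1)"
  have "0 < T" "R0 < T" "lam < L"
    using R0 eps by (auto simp: T_def L_def)
  have phi_ge1: "\<forall>t\<ge>T. 1 \<le> \<phi> t"
  proof (intro allI impI)
    fix t assume "T \<le> t"
    then have "1 \<le> ln t" "ln t \<le> \<phi> t"
      using ln_ge_iff[of t 1] phi_bounds \<open>0 < T\<close> \<open>R0 < T\<close> by (auto simp: T_def)
    then show "1 \<le> \<phi> t"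
      by linarith
  qed
  have s_gt: "\<forall>u\<ge>T. u < s u"
    using s_bounds \<open>R0 < T\<close> by auto
  have summable: "summable (\<lambda>n. 1 / norm (z n))"
    using z_exp z_nz z_inf by (rule summable_inverse_norm_of_conv_exponent_less_one)
  have "mono_on {T..} \<phi>"
    using \<open>R0 < T\<close> by (intro mono_on_subset[OF phi_mono]) auto
  then have counts: "\<forall>\<nu>>lam. \<exists>K\<ge>0. \<forall>t\<ge>T.
      real (counting_function (\<lambda>n. norm (z n)) t) \<le> K * \<phi> t powr \<nu>"
    using lam lam_nonneg z_inf phi_ge1 by (auto intro!: counting_function_le_of_phi_exponent_less)
  then obtain K where near: "\<forall>t\<ge>T. real (counting_function (\<lambda>n. norm (z n)) t) \<le> K * \<phi> t powr L"
    using \<open>lam < L\<close> by blast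
  have "(if lam = 0 then \<infinity> else ereal (1 / lam)) = inverse (ereal lam)"
    by (simp add: inverse_eq_divide)
  with cond have
      "Limsup at_top (\<lambda>u. ereal (deriv \<phi> (s u) * deriv s u * u / \<phi> (s u))) < inverse (ereal lam) \<or>
      inverse (ereal lam) \<le> Liminf at_top (\<lambda>u. ereal (deriv \<phi> (s u) * deriv s u * u / \<phi> (s u)))"
    unfolding Let_def by simp
  moreover have "\<forall>n. 0 < norm (z n)" "\<forall>t\<ge>T. \<phi> differentiable (at t)" "\<forall>u\<ge>T. s differentiable (at u)"
    using z_nz phi_diff s_diff \<open>R0 < T\<close> by auto
  ultimately obtain M where "0 \<le> M" and far: "eventually (\<lambda>r. \<forall>F. finite F \<longrightarrow>
      (\<forall>n\<in>F. s r < norm (z n)) \<longrightarrow> (\<Sum>n\<in>F. r / norm (z n)) \<le> M * \<phi> (s r) powr L) at_top"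
    using tail_sum_le_of_elasticity_dichotomy[OF z_inf _ summable \<open>0 < T\<close> s_gt phi_ge1 _ _ counts
        lam_nonneg \<open>lam < L\<close>]
    by blast
  obtain c where "1 < c" and "eventually (\<lambda>r. c * r \<le> s r) at_top"
    using Liminf_ratio_gt_one_obtain[OF s_liminf] by blast
  moreover have "eventually (\<lambda>r. s r \<le> r\<^sup>2) at_top"
    using eventually_gt_at_top[of R0] by eventually_elim (use s_bounds in auto)
  moreover have
      "eventually (\<lambda>r. real (counting_function (\<lambda>n. norm (z n)) (s r)) \<le> K * \<phi> (s r) powr L) at_top"
    using eventually_ge_at_top[of T] by eventually_elim (use near s_gt in force)
  ultimately have "\<exists>C R. \<forall>w. R \<le> norm w \<and> (\<forall>n. norm (z n) powr (- L) < norm (w - z n)) \<longrightarrow>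
      ln (1 / norm (canonical_product z w)) \<le> C * \<phi> (s (norm w)) powr L * ln (norm w)"
    using \<open>lam < L\<close> lam_nonneg \<open>0 \<le> M\<close> far
    by (intro ln_inverse_canonical_product_bound[where G = "\<lambda>r. \<phi> (s r) powr L", OF z_nz z_inf summable])
      auto
  then show ?thesis
    by (simp add: L_def)
qed

end
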